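(* Let $G$ be a closed graph on a compact metrizable space $X$. If $\mathfrak{b}<\kappa(G)$, then the poset $P_G$ adds no dominating reals (i.e. no condition of $P_G$ forces some element of $\omega^\omega$ to dominate modulo finite all ground model elements of $\omega^\omega$).
   Context: A graph $G$ on $X$ is a symmetric irreflexive relation; it is closed if it is closed in $(X\times X)\setminus$ diagonal. A $G$-anticlique is a set with no two distinct $G$-connected points. $\kappa(G)$ is the minimum cardinality of a subset of $X$ not covered by countably many compact $G$-anticliques ($\infty$ if $X$ is so covered). $\mathfrak{b}$ is the minimum cardinality of a subset of $\omega^\omega$ unbounded in the modulo-finite domination order. The poset $P_G$ consists of all pairs $p=\langle a_p,o_p\rangle$ where $a_p\subset X$ is a finite $G$-anticlique and $o_p\subset X$ is open with $a_p\subset o_p$; $q\leq p$ iff $a_p\subset a_q$ and $o_q\subset o_p$. *)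

theory Defs
  imports "HOL-Analysis.Analysis"
begin

definition anticlique :: "('a \<Rightarrow> 'a \<Rightarrow> bool) \<Rightarrow> 'a set \<Rightarrow> bool" where
  "anticlique G A \<longleftrightarrow> (\<forall>x\<in>A. \<forall>y\<in>A. x \<noteq> y \<longrightarrow> \<not> G x y)"

definition closed_graph :: "('a::topological_space \<Rightarrow> 'a \<Rightarrow> bool) \<Rightarrow> bool" where
  "closed_graph G \<longleftrightarrow> (\<forall>x y. G x y \<longrightarrow> G y x) \<and> (\<forall>x. \<not> G x x) \<and>
     closedin (top_of_set {p::'a \<times> 'a. fst p \<noteq> snd p}) {(x, y). G x y}"

definition cc_covered :: "('a::topological_space \<Rightarrow> 'a \<Rightarrow> bool) \<Rightarrow> 'a set \<Rightarrow> bool" where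
  "cc_covered G Y \<longleftrightarrow>
     (\<exists>C. countable C \<and> (\<forall>K\<in>C. compact K \<and> anticlique G K) \<and> Y \<subseteq> \<Union>C)"

definition unbounded_family :: "(nat \<Rightarrow> nat) set \<Rightarrow> bool" where
  "unbounded_family F \<longleftrightarrow>
     \<not> (\<exists>g::nat \<Rightarrow> nat. \<forall>f\<in>F. \<forall>\<^sub>F n in sequentially. f n \<le> g n)"

text \<open>b < kappa(G), where b is the least size of an unbounded family and kappa(G) the
  least size of a subset of X not covered by countably many compact anticliques
  (infinity if X is covered): there is an unbounded family F such that every subset
  of X of cardinality at most |F| is so covered.\<close>
definition b_less_kappa :: "('a::topological_space \<Rightarrow> 'a \<Rightarrow> bool) \<Rightarrow> bool" where
  "b_less_kappa G \<longleftrightarrow>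
     (\<exists>F::(nat \<Rightarrow> nat) set. unbounded_family F \<and>
        (\<forall>Y::'a set. (card_of Y, card_of F) \<in> ordLeq \<longrightarrow> cc_covered G Y))"

definition PG :: "('a::topological_space \<Rightarrow> 'a \<Rightarrow> bool) \<Rightarrow> ('a set \<times> 'a set) set" where
  "PG G = {(a, U). finite a \<and> anticlique G a \<and> open U \<and> a \<subseteq> U}"

text \<open>pg_le q p means q is stronger than p: a_p \<subseteq> a_q and o_q \<subseteq> o_p.\<close>
definition pg_le :: "('a set \<times> 'a set) \<Rightarrow> ('a set \<times> 'a set) \<Rightarrow> bool" where
  "pg_le q p \<longleftrightarrow> fst p \<subseteq> fst q \<and> snd q \<subseteq> snd p"

definition compatible :: "'c set \<Rightarrow> ('c \<Rightarrow> 'c \<Rightarrow> bool) \<Rightarrow> 'c \<Rightarrow> 'c \<Rightarrow> bool" where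
  "compatible P le p q \<longleftrightarrow> (\<exists>r\<in>P. le r p \<and> le r q)"

text \<open>A (nice) name for an element of omega^omega: A n k is the set of conditions
  deciding "tau(n) = k"; for each n the conditions deciding different values are
  incompatible, and the conditions deciding some value of tau(n) are dense.
  In a generic extension by a filter G, tau_G(n) = k iff G meets A n k.\<close>
definition real_name :: "'c set \<Rightarrow> ('c \<Rightarrow> 'c \<Rightarrow> bool) \<Rightarrow> (nat \<Rightarrow> nat \<Rightarrow> 'c set) \<Rightarrow> bool" where
  "real_name P le A \<longleftrightarrow>
     (\<forall>n k. A n k \<subseteq> P) \<and>
     (\<forall>n k k' p q. k \<noteq> k' \<longrightarrow> p \<in> A n k \<longrightarrow> q \<in> A n k' \<longrightarrow> \<not> compatible P le p q) \<and>
     (\<forall>n. \<forall>q\<in>P. \<exists>r\<in>P. le r q \<and> (\<exists>k. r \<in> A n k))"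

definition forces_ge :: "'c set \<Rightarrow> ('c \<Rightarrow> 'c \<Rightarrow> bool) \<Rightarrow> (nat \<Rightarrow> nat \<Rightarrow> 'c set)
    \<Rightarrow> 'c \<Rightarrow> nat \<Rightarrow> nat \<Rightarrow> bool" where
  "forces_ge P le A p n m \<longleftrightarrow>
     (\<forall>q\<in>P. le q p \<longrightarrow> (\<exists>r\<in>P. le r q \<and> (\<exists>k\<ge>m. r \<in> A n k)))"

definition forces_dominates :: "'c set \<Rightarrow> ('c \<Rightarrow> 'c \<Rightarrow> bool) \<Rightarrow> (nat \<Rightarrow> nat \<Rightarrow> 'c set)
    \<Rightarrow> 'c \<Rightarrow> (nat \<Rightarrow> nat) \<Rightarrow> bool" where
  "forces_dominates P le A p f \<longleftrightarrow>
     (\<forall>q\<in>P. le q p \<longrightarrow>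
        (\<exists>r\<in>P. le r q \<and> (\<exists>m. \<forall>n\<ge>m. forces_ge P le A r n (f n))))"

definition adds_dominating_real :: "'c set \<Rightarrow> ('c \<Rightarrow> 'c \<Rightarrow> bool) \<Rightarrow> bool" where
  "adds_dominating_real P le \<longleftrightarrow>
     (\<exists>A p. real_name P le A \<and> p \<in> P \<and> (\<forall>f::nat \<Rightarrow> nat. forces_dominates P le A p f))"

end

theory Submission
  imports Defs
begin

text \<open>Suppose a condition forces a name \<open>\<tau>\<close> to dominate the ground model, and pick an unbounded
  family \<open>F\<close> of size \<open>\<bb>\<close>. For each \<open>f \<in> F\<close> some condition \<open>p\<^sub>f\<close> forces \<open>\<tau>(n) \<ge> f(n)\<close> for all
  \<open>n \<ge> m\<^sub>f\<close>. The finite anticliques of the \<open>p\<^sub>f\<close> have at most \<open>\<bb> < \<kappa>(G)\<close> points altogether, so they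
  are covered by countably many compact anticliques \<open>K\<^sub>j\<close>. Classify each \<open>f\<close> by the countable code
  consisting of \<open>m\<^sub>f\<close>, the pieces \<open>K\<^sub>j\<close> containing the points of \<open>p\<^sub>f\<close>, and a radius \<open>1/(e+1)\<close> such
  that the balls around these points lie in the open set of \<open>p\<^sub>f\<close> and span no edges between
  different points. Within a code class the values \<open>f(n)\<close> are bounded for each \<open>n \<ge> m\<^sub>f\<close>: otherwise
  compactness yields a sequence in the class with \<open>f(n) \<rightarrow> \<infinity>\<close> whose conditions converge to a limit
  condition, and an extension of it deciding \<open>\<tau>(n)\<close> is compatible with almost all of them.
  Summing countably many bounds then dominates \<open>F\<close>.\<close>

lemma pg_le_refl [simp]: "pg_le p p"
  by (simp add: pg_le_def)

lemma pg_le_trans: "pg_le p q \<Longrightarrow> pg_le q r \<Longrightarrow> pg_le p r"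
  by (auto simp: pg_le_def)

lemma closed_graph_sym: "closed_graph G \<Longrightarrow> G x y \<Longrightarrow> G y x"
  by (simp add: closed_graph_def)

lemma closed_graph_irrefl: "closed_graph G \<Longrightarrow> \<not> G x x"
  by (simp add: closed_graph_def)

lemma PG_fst_finite: "p \<in> PG G \<Longrightarrow> finite (fst p)"
  by (cases p) (simp add: PG_def)

lemma PG_common_extension:
  assumes "(c, Z) \<in> PG G" "(b, V) \<in> PG G" "b \<subseteq> Z" "c \<subseteq> V"
    and "\<And>z w. z \<in> c \<Longrightarrow> w \<in> b \<Longrightarrow> \<not> G z w"
    and "\<And>x y. G x y \<Longrightarrow> G y x"
  shows "compatible (PG G) pg_le (c, Z) (b, V)"
proof -
  have "anticlique G (c \<union> b)"
    using assms(1,2,5,6) unfolding PG_def anticlique_def by blast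
  then have "(c \<union> b, Z \<inter> V) \<in> PG G"
    using assms(1-4) unfolding PG_def by auto
  then show ?thesis
    unfolding compatible_def pg_le_def by force
qed

lemma forces_ge_le_decided_value:
  assumes "reflp le" "transp le" "real_name P le A" "forces_ge P le A p n m"
    and "q \<in> A n k" "compatible P le q p"
  shows "m \<le> k"
proof -
  obtain s where s: "s \<in> P" "le s q" "le s p"
    using assms(6) unfolding compatible_def by blast
  then obtain r k' where r: "r \<in> P" "le r s" "m \<le> k'" "r \<in> A n k'"
    using assms(4) unfolding forces_ge_def by blast
  have "compatible P le q r"
    unfolding compatible_def using r s assms(1,2) by (meson reflpD transpD)
  then have "k = k'"
    using assms(3,5) r(4) unfolding real_name_def by blast
  with r(3) show ?thesis by simp
qed

definition non_edges :: "('a \<Rightarrow> 'a \<Rightarrow> bool) \<Rightarrow> ('a \<times> 'a) set" where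
  "non_edges G = {(x, y). x \<noteq> y \<and> \<not> G x y}"

lemma closed_graph_open_non_edges:
  fixes G :: "'a::t2_space \<Rightarrow> 'a \<Rightarrow> bool"
  assumes "closed_graph G"
  shows "open (non_edges G)"
proof -
  have "closedin (top_of_set {p::'a \<times> 'a. fst p \<noteq> snd p}) {(x, y). G x y}"
    using assms unfolding closed_graph_def by blast
  then obtain T where T: "closed T" "{(x, y). G x y} = {p::'a \<times> 'a. fst p \<noteq> snd p} \<inter> T"
    unfolding closedin_closed by blast
  have "G x y \<longleftrightarrow> x \<noteq> y \<and> (x, y) \<in> T" for x y
    using eqset_imp_iff[OF T(2), of "(x, y)"] by simp
  then have "non_edges G = {p::'a \<times> 'a. fst p \<noteq> snd p} - T"
    by (auto simp: non_edges_def)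
  moreover have "open {p::'a \<times> 'a. fst p \<noteq> snd p}"
    by (intro open_Collect_neq continuous_intros)
  ultimately show ?thesis
    using T(1) by (simp add: open_Diff)
qed

lemma seq_compact_common_convergent_subseq:
  fixes u :: "nat \<Rightarrow> nat \<Rightarrow> 'a::topological_space"
  assumes "seq_compact (UNIV :: 'a set)"
  shows "\<exists>\<sigma> y. strict_mono \<sigma> \<and> (\<forall>t<l. (\<lambda>i. u (\<sigma> i) t) \<longlonglongrightarrow> y t)"
proof (induction l)
  case 0
  show ?case
    using strict_mono_id by blast
next
  case (Suc l)
  then obtain \<sigma> y where \<sigma>: "strict_mono \<sigma>" "\<forall>t<l. (\<lambda>i. u (\<sigma> i) t) \<longlonglongrightarrow> y t"
    by blast
  obtain z \<rho> where \<rho>: "strict_mono \<rho>" "((\<lambda>i. u (\<sigma> i) l) \<circ> \<rho>) \<longlonglongrightarrow> z"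
    using assms by (rule seq_compactE) auto
  have "(\<lambda>i. u ((\<sigma> \<circ> \<rho>) i) t) \<longlonglongrightarrow> (y(l := z)) t" if "t < Suc l" for t
  proof (cases "t = l")
    case True
    then show ?thesis using \<rho> by (simp add: o_def)
  next
    case False
    then have "(\<lambda>i. u (\<sigma> i) t) \<longlonglongrightarrow> y t"
      using \<sigma> that by simp
    from LIMSEQ_subseq_LIMSEQ[OF this \<rho>(1)] False show ?thesis
      by (simp add: o_def)
  qed
  moreover have "strict_mono (\<sigma> \<circ> \<rho>)"
    using \<sigma>(1) \<rho>(1) strict_mono_o by blast
  ultimately show ?case by blast
qed

definition radius_separates :: "('a::metric_space \<times> 'a) set \<Rightarrow> 'a set \<Rightarrow> 'a list \<Rightarrow> real \<Rightarrow> bool" where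
  "radius_separates N V xs r \<longleftrightarrow>
     (\<forall>t<length xs. ball (xs ! t) r \<subseteq> V) \<and>
     (\<forall>s<length xs. \<forall>t<length xs. s \<noteq> t \<longrightarrow> ball (xs ! s) r \<times> ball (xs ! t) r \<subseteq> N)"

lemma eventually_ball_inverse_Suc_subset:
  assumes "open S" "x \<in> S"
  shows "eventually (\<lambda>e. ball x (1 / real (Suc e)) \<subseteq> S) sequentially"
proof -
  obtain \<epsilon> where \<epsilon>: "\<epsilon> > 0" "ball x \<epsilon> \<subseteq> S"
    using assms open_contains_ball by blast
  have "eventually (\<lambda>e. inverse (real (Suc e)) < \<epsilon>) sequentially"
    using order_tendstoD(2)[OF LIMSEQ_inverse_real_of_nat \<epsilon>(1)] .
  then show ?thesis
  proof (rule eventually_mono)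
    fix e assume "inverse (real (Suc e)) < \<epsilon>"
    then have "ball x (1 / real (Suc e)) \<subseteq> ball x \<epsilon>"
      by (simp add: inverse_eq_divide subset_ball)
    with \<epsilon>(2) show "ball x (1 / real (Suc e)) \<subseteq> S"
      by (rule order_trans[rotated])
  qed
qed

lemma eventually_balls_inverse_Suc_subset:
  assumes "open N" "(x, y) \<in> N"
  shows "eventually (\<lambda>e. ball x (1 / real (Suc e)) \<times> ball y (1 / real (Suc e)) \<subseteq> N) sequentially"
proof -
  obtain A B where AB: "open A" "open B" "(x, y) \<in> A \<times> B" "A \<times> B \<subseteq> N"
    by (rule open_prod_elim[OF assms])
  from AB(3) have "x \<in> A" "y \<in> B"
    by simp_all
  from eventually_conj[OF eventually_ball_inverse_Suc_subset[OF AB(1) this(1)]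
      eventually_ball_inverse_Suc_subset[OF AB(2) this(2)]]
  show ?thesis
  proof (rule eventually_mono)
    fix e assume "ball x (1 / real (Suc e)) \<subseteq> A \<and> ball y (1 / real (Suc e)) \<subseteq> B"
    then show "ball x (1 / real (Suc e)) \<times> ball y (1 / real (Suc e)) \<subseteq> N"
      using AB(4) by (meson Sigma_mono order_trans)
  qed
qed

lemma ex_radius_separates:
  assumes "open N" "open V" "set xs \<subseteq> V"
    and "\<And>s t. s < length xs \<Longrightarrow> t < length xs \<Longrightarrow> s \<noteq> t \<Longrightarrow> (xs ! s, xs ! t) \<in> N"
  shows "\<exists>e. radius_separates N V xs (1 / real (Suc e))"
proof -
  have "eventually (\<lambda>e. \<forall>t\<in>{..<length xs}. ball (xs ! t) (1 / real (Suc e)) \<subseteq> V) sequentially"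
    using assms(2,3) by (intro eventually_ball_finite ballI eventually_ball_inverse_Suc_subset) auto
  moreover have "eventually (\<lambda>e. s \<noteq> t \<longrightarrow>
      ball (xs ! s) (1 / real (Suc e)) \<times> ball (xs ! t) (1 / real (Suc e)) \<subseteq> N) sequentially"
    if "s < length xs" "t < length xs" for s t
  proof (cases "s = t")
    case False
    then show ?thesis
      using eventually_balls_inverse_Suc_subset[OF assms(1) assms(4)] that by (auto elim: eventually_mono)
  qed simp
  then have "eventually (\<lambda>e. \<forall>s\<in>{..<length xs}. \<forall>t\<in>{..<length xs}. s \<noteq> t \<longrightarrow>
      ball (xs ! s) (1 / real (Suc e)) \<times> ball (xs ! t) (1 / real (Suc e)) \<subseteq> N) sequentially"
    by (intro eventually_ball_finite ballI) auto
  ultimately have "eventually (\<lambda>e. radius_separates N V xs (1 / real (Suc e))) sequentially"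
    by eventually_elim (auto simp: radius_separates_def)
  then show ?thesis
    using eventually_happens'[OF sequentially_bot] by blast
qed

text \<open>With radius \<open>\<rho>/2\<close>, once \<open>xs i\<close> is \<open>\<rho>/2\<close>-close to \<open>y\<close>, the open set of this condition lies in
  the \<open>\<rho>\<close>-balls around the points of \<open>xs i\<close>, hence inside \<open>V i\<close>.\<close>

definition limit_condition :: "(nat \<Rightarrow> 'a::metric_space) \<Rightarrow> nat \<Rightarrow> real \<Rightarrow> 'a set \<times> 'a set" where
  "limit_condition y l \<rho> = (y ` {..<l}, \<Union>t<l. ball (y t) (\<rho> / 2))"

lemma limit_condition_PG:
  assumes "0 < \<rho>" and len: "\<And>i. length (xs i) = l"
    and sep: "\<And>i. radius_separates (non_edges G) (V i) (xs i) \<rho>"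
    and lim: "\<And>t. t < l \<Longrightarrow> (\<lambda>i. xs i ! t) \<longlonglongrightarrow> y t"
  shows "limit_condition y l \<rho> \<in> PG G"
proof -
  have "eventually (\<lambda>i. \<forall>t\<in>{..<l}. dist (xs i ! t) (y t) < \<rho> / 2) sequentially"
    using \<open>0 < \<rho>\<close> by (intro eventually_ball_finite ballI tendstoD lim) auto
  then obtain i where i: "\<forall>t\<in>{..<l}. dist (xs i ! t) (y t) < \<rho> / 2"
    using eventually_happens'[OF sequentially_bot] by blast
  have "\<not> G (y s) (y t)" if "s < l" "t < l" "y s \<noteq> y t" for s t
  proof -
    have "dist (xs i ! s) (y s) < \<rho> / 2" "dist (xs i ! t) (y t) < \<rho> / 2"
      using i that(1,2) by auto
    then have "(y s, y t) \<in> ball (xs i ! s) \<rho> \<times> ball (xs i ! t) \<rho>"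
      using \<open>0 < \<rho>\<close> by simp
    moreover have "s \<noteq> t"
      using that(3) by auto
    ultimately show ?thesis
      using sep[of i] len[of i] that(1,2) unfolding radius_separates_def non_edges_def by blast
  qed
  then have "anticlique G (y ` {..<l})"
    unfolding anticlique_def by blast
  then show ?thesis
    unfolding limit_condition_def PG_def using \<open>0 < \<rho>\<close> by auto
qed

lemma eventually_no_edges_to_limit:
  fixes G :: "'a::metric_space \<Rightarrow> 'a \<Rightarrow> bool"
  assumes G: "closed_graph G" and c: "finite c" "anticlique G c" "y ` {..<l} \<subseteq> c"
    and lim: "\<And>t. t < l \<Longrightarrow> (\<lambda>i. xs i ! t) \<longlonglongrightarrow> y t"
    and no_edge_to_limit: "\<And>i t. t < l \<Longrightarrow> \<not> G (y t) (xs i ! t)"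
  shows "eventually (\<lambda>i. \<forall>z\<in>c. \<forall>t\<in>{..<l}. \<not> G z (xs i ! t)) sequentially"
proof -
  have "eventually (\<lambda>i. \<not> G z (xs i ! t)) sequentially" if "z \<in> c" "t < l" for z t
  proof (cases "z = y t")
    case True
    then show ?thesis
      using no_edge_to_limit \<open>t < l\<close> by simp
  next
    case False
    moreover have "y t \<in> c"
      using c(3) \<open>t < l\<close> by auto
    ultimately have "(z, y t) \<in> non_edges G"
      using c(2) \<open>z \<in> c\<close> unfolding anticlique_def non_edges_def by auto
    moreover have "(\<lambda>i. (z, xs i ! t)) \<longlonglongrightarrow> (z, y t)"
      using lim \<open>t < l\<close> by (intro tendsto_intros)
    ultimately have "eventually (\<lambda>i. (z, xs i ! t) \<in> non_edges G) sequentially"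
      using closed_graph_open_non_edges[OF G] topological_tendstoD by blast
    then show ?thesis
      by (rule eventually_mono) (simp add: non_edges_def)
  qed
  then show ?thesis
    using c(1) by (simp add: eventually_ball_finite)
qed

lemma limit_condition_eventually_compatible:
  fixes G :: "'a::metric_space \<Rightarrow> 'a \<Rightarrow> bool"
  assumes G: "closed_graph G" and "0 < \<rho>"
    and p: "\<And>i. (set (xs i), V i) \<in> PG G" "\<And>i. length (xs i) = l"
    and sep: "\<And>i. radius_separates (non_edges G) (V i) (xs i) \<rho>"
    and lim: "\<And>t. t < l \<Longrightarrow> (\<lambda>i. xs i ! t) \<longlonglongrightarrow> y t"
    and no_edge_to_limit: "\<And>i t. t < l \<Longrightarrow> \<not> G (y t) (xs i ! t)"
    and r: "r \<in> PG G" "pg_le r (limit_condition y l \<rho>)"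
  shows "eventually (\<lambda>i. compatible (PG G) pg_le r (set (xs i), V i)) sequentially"
proof -
  obtain c Z where cZ: "r = (c, Z)"
    by (cases r)
  have c: "finite c" "anticlique G c" "open Z" "y ` {..<l} \<subseteq> c" "c \<subseteq> Z"
      "Z \<subseteq> (\<Union>t<l. ball (y t) (\<rho> / 2))"
    using r unfolding cZ PG_def pg_le_def limit_condition_def by auto
  have set_xs: "set (xs i) = (\<lambda>t. xs i ! t) ` {..<l}" for i
    using p(2)[of i] by (auto simp: set_conv_nth)
  have "eventually (\<lambda>i. xs i ! t \<in> Z) sequentially" if "t < l" for t
    using topological_tendstoD[OF lim[OF that] c(3)] c(4,5) that by blast
  then have "eventually (\<lambda>i. \<forall>t\<in>{..<l}. xs i ! t \<in> Z) sequentially"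
    by (simp add: eventually_ball_finite)
  moreover have "eventually (\<lambda>i. \<forall>t\<in>{..<l}. dist (xs i ! t) (y t) < \<rho> / 2) sequentially"
    using \<open>0 < \<rho>\<close> by (intro eventually_ball_finite ballI tendstoD lim) auto
  moreover have "eventually (\<lambda>i. \<forall>z\<in>c. \<forall>t\<in>{..<l}. \<not> G z (xs i ! t)) sequentially"
    using G c(1,2,4) lim no_edge_to_limit by (rule eventually_no_edges_to_limit)
  ultimately show ?thesis
  proof eventually_elim
    case (elim i)
    have "z \<in> V i" if "z \<in> c" for z
    proof -
      obtain t where t: "t < l" "dist (y t) z < \<rho> / 2"
        using c(5,6) \<open>z \<in> c\<close> by auto
      moreover have "dist (xs i ! t) (y t) < \<rho> / 2"
        using elim t(1) by auto
      ultimately have "z \<in> ball (xs i ! t) \<rho>"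
        using dist_triangle[of "xs i ! t" z "y t"] by simp
      then show "z \<in> V i"
        using sep[of i] p(2)[of i] t(1) unfolding radius_separates_def by blast
    qed
    then show ?case
      unfolding cZ
      by (intro PG_common_extension[OF r(1)[unfolded cZ] p(1) _ _ _ closed_graph_sym[OF G]])
        (use elim in \<open>auto simp: set_xs\<close>)
  qed
qed

lemma forces_ge_bounded_on_code_class:
  fixes G :: "'a::metric_space \<Rightarrow> 'a \<Rightarrow> bool"
  assumes "compact (UNIV :: 'a set)" and G: "closed_graph G" and A: "real_name (PG G) pg_le A"
    and K: "\<And>j. closed (K j) \<and> anticlique G (K j)" and "0 < \<rho>"
    and p: "\<And>f. f \<in> S \<Longrightarrow> (set (xs f), V f) \<in> PG G"
    and len: "\<And>f. f \<in> S \<Longrightarrow> length (xs f) = length idx"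
    and in_K: "\<And>f t. f \<in> S \<Longrightarrow> t < length idx \<Longrightarrow> xs f ! t \<in> K (idx ! t)"
    and sep: "\<And>f. f \<in> S \<Longrightarrow> radius_separates (non_edges G) (V f) (xs f) \<rho>"
    and forces: "\<And>f. f \<in> S \<Longrightarrow> forces_ge (PG G) pg_le A (set (xs f), V f) n (g f)"
  shows "\<exists>B. \<forall>f\<in>S. g f \<le> B"
proof (rule ccontr)
  assume "\<nexists>B. \<forall>f\<in>S. g f \<le> B"
  then have "\<exists>f. f \<in> S \<and> i < g f" for i
    by (meson not_le)
  then obtain \<phi> where \<phi>: "\<And>i. \<phi> i \<in> S" "\<And>i. i < g (\<phi> i)"
    by metis
  obtain \<sigma> y where \<sigma>: "strict_mono \<sigma>"
    and lim: "\<And>t. t < length idx \<Longrightarrow> (\<lambda>i. xs (\<phi> (\<sigma> i)) ! t) \<longlonglongrightarrow> y t"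
    using seq_compact_common_convergent_subseq[OF compact_imp_seq_compact[OF assms(1)],
        where u = "\<lambda>i t. xs (\<phi> i) ! t" and l = "length idx"]
    by blast
  have "y t \<in> K (idx ! t)" if "t < length idx" for t
    using closed_sequentially[OF _ _ lim[OF that]] K in_K[OF \<phi>(1) that] by blast
  moreover have "xs (\<phi> (\<sigma> i)) ! t \<in> K (idx ! t)" if "t < length idx" for i t
    using in_K[OF \<phi>(1) that] .
  moreover note closed_graph_irrefl[OF G]
  ultimately have no_edge_to_limit: "\<not> G (y t) (xs (\<phi> (\<sigma> i)) ! t)" if "t < length idx" for i t
    using K[of "idx ! t"] that unfolding anticlique_def by (cases "y t = xs (\<phi> (\<sigma> i)) ! t") auto
  have "limit_condition y (length idx) \<rho> \<in> PG G"
    by (rule limit_condition_PG[OF \<open>0 < \<rho>\<close> len[OF \<phi>(1)] sep[OF \<phi>(1)] lim])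
  then obtain r k where r: "r \<in> PG G" "pg_le r (limit_condition y (length idx) \<rho>)" "r \<in> A n k"
    using A unfolding real_name_def by blast
  have "eventually (\<lambda>i. compatible (PG G) pg_le r (set (xs (\<phi> (\<sigma> i))), V (\<phi> (\<sigma> i))))
      sequentially"
    by (rule limit_condition_eventually_compatible[OF G \<open>0 < \<rho>\<close> p[OF \<phi>(1)] len[OF \<phi>(1)] sep[OF \<phi>(1)]
          lim no_edge_to_limit r(1,2)])
  then obtain i where i: "compatible (PG G) pg_le r (set (xs (\<phi> (\<sigma> i))), V (\<phi> (\<sigma> i)))"
      "k \<le> i"
    using eventually_happens'[OF sequentially_bot eventually_conj[OF _ eventually_ge_at_top[of k]]]
    by blast
  have "g (\<phi> (\<sigma> i)) \<le> k"
    using forces_ge_le_decided_value[OF _ _ A forces[OF \<phi>(1)] r(3) i(1)]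
    by (simp add: reflp_def transp_def pg_le_trans)
  moreover have "i \<le> \<sigma> i"
    using seq_suble[OF \<sigma>] .
  ultimately show False
    using \<phi>(2)[of "\<sigma> i"] i(2) by linarith
qed

lemma dominated_if_countably_many_bounded_classes:
  fixes code :: "(nat \<Rightarrow> nat) \<Rightarrow> 'c::countable" and m :: "'c \<Rightarrow> nat"
  assumes "\<And>c n. m c \<le> n \<Longrightarrow> \<exists>B. \<forall>f\<in>F. code f = c \<longrightarrow> f n \<le> B"
  shows "\<exists>h. \<forall>f\<in>F. \<forall>\<^sub>F n in sequentially. f n \<le> h n"
proof -
  define bound where "bound c n = (SOME B. \<forall>f\<in>F. code f = c \<longrightarrow> f n \<le> B)" for c n
  have bound: "f n \<le> bound (code f) n" if "f \<in> F" "m (code f) \<le> n" for f n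
    using someI_ex[OF assms[OF that(2)]] that(1) unfolding bound_def by blast
  define h where "h n = (\<Sum>i\<le>n. bound (from_nat i) n)" for n
  have le_h: "f n \<le> h n" if "f \<in> F" "max (m (code f)) (to_nat (code f)) \<le> n" for f n
  proof -
    have "f n \<le> bound (from_nat (to_nat (code f))) n"
      using bound that by simp
    also have "\<dots> \<le> h n"
      unfolding h_def using that(2) by (intro member_le_sum) auto
    finally show ?thesis .
  qed
  show ?thesis
  proof (intro exI[of _ h] ballI)
    fix f assume "f \<in> F"
    show "\<forall>\<^sub>F n in sequentially. f n \<le> h n"
      by (rule eventually_sequentiallyI[of "max (m (code f)) (to_nat (code f))"])
        (rule le_h[OF \<open>f \<in> F\<close>])
  qed
qed

lemma unbounded_family_infinite:
  assumes "unbounded_family F"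
  shows "infinite F"
proof
  assume "finite F"
  then have "\<forall>f\<in>F. \<forall>\<^sub>F n in sequentially. f n \<le> (\<Sum>g\<in>F. g n)"
    by (auto intro!: always_eventually member_le_sum[where f = "\<lambda>g. g _"])
  then have "\<exists>h. \<forall>f\<in>F. \<forall>\<^sub>F n in sequentially. f n \<le> h n"
    by (rule exI[of _ "\<lambda>n. \<Sum>g\<in>F. g n"])
  with assms show False
    unfolding unbounded_family_def by blast
qed

lemma card_of_UN_finite_ordLeq:
  assumes "infinite F" "\<And>f. f \<in> F \<Longrightarrow> finite (a f)"
  shows "(card_of (\<Union>f\<in>F. a f), card_of F) \<in> ordLeq"
  using assms by (intro card_of_UNION_ordLeq_infinite card_of_mono1 ballI ordLeq3_finite_infinite) auto

lemma cc_covered_nat_indexed: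
  assumes "cc_covered G Y"
  shows "\<exists>K :: nat \<Rightarrow> 'a::topological_space set.
    (\<forall>j. compact (K j) \<and> anticlique G (K j)) \<and> Y \<subseteq> (\<Union>j. K j)"
proof -
  obtain C where C: "countable C" "\<forall>K\<in>C. compact K \<and> anticlique G K" "Y \<subseteq> \<Union>C"
    using assms unfolding cc_covered_def by blast
  define K where "K = from_nat_into (insert {} C)"
  have range_K: "range K = insert {} C"
    unfolding K_def using C(1) by (intro range_from_nat_into) auto
  have "compact (K j) \<and> anticlique G (K j)" for j
  proof -
    have "K j = {} \<or> K j \<in> C"
      using range_K by blast
    then show ?thesis
      using C(2) by (auto simp: anticlique_def)
  qed
  moreover have "Y \<subseteq> (\<Union>j. K j)"
    using C(3) range_K by blast
  ultimately show ?thesis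
    by blast
qed

text \<open>Of this data only \<open>idx\<close> and \<open>e\<close> enter the countable code; \<open>xs\<close> fixes the order of the points.\<close>

definition condition_code ::
    "('a::metric_space \<Rightarrow> 'a \<Rightarrow> bool) \<Rightarrow> ('j \<Rightarrow> 'a set) \<Rightarrow> 'a set \<Rightarrow> 'a set \<Rightarrow> 'a list \<Rightarrow> 'j list \<Rightarrow> nat \<Rightarrow> bool"
  where "condition_code G K a V xs idx e \<longleftrightarrow>
    set xs = a \<and> length idx = length xs \<and> (\<forall>t<length xs. xs ! t \<in> K (idx ! t)) \<and>
    radius_separates (non_edges G) V xs (1 / real (Suc e))"

lemma PG_ex_condition_code:
  fixes G :: "'a::metric_space \<Rightarrow> 'a \<Rightarrow> bool"
  assumes "closed_graph G" "(a, V) \<in> PG G" "a \<subseteq> (\<Union>j. K j)"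
  shows "\<exists>xs idx e. condition_code G K a V xs idx e"
proof -
  have a: "finite a" "anticlique G a" "open V" "a \<subseteq> V"
    using assms(2) unfolding PG_def by auto
  obtain xs where xs: "set xs = a" "distinct xs"
    using finite_distinct_list[OF a(1)] by blast
  define idx where "idx = map (\<lambda>x. SOME j. x \<in> K j) xs"
  have in_K: "xs ! t \<in> K (idx ! t)" if "t < length xs" for t
  proof -
    have "\<exists>j. xs ! t \<in> K j"
      using assms(3) xs(1) nth_mem[OF that] by blast
    from someI_ex[OF this] show ?thesis
      using that unfolding idx_def by simp
  qed
  have "(xs ! s, xs ! t) \<in> non_edges G"
    if "s < length xs" "t < length xs" "s \<noteq> t" for s t
    using a(2) xs that unfolding anticlique_def non_edges_def by (auto simp: nth_eq_iff_index_eq)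
  then obtain e where "radius_separates (non_edges G) V xs (1 / real (Suc e))"
    using ex_radius_separates[OF closed_graph_open_non_edges[OF assms(1)] a(3)] a(4) xs(1)
    by blast
  then have "condition_code G K a V xs idx e"
    unfolding condition_code_def using xs(1) in_K by (simp add: idx_def)
  then show ?thesis
    by blast
qed

lemma dominated_if_forced_bounds_covered:
  fixes G :: "'a::metric_space \<Rightarrow> 'a \<Rightarrow> bool" and K :: "'j::countable \<Rightarrow> 'a set"
  assumes "compact (UNIV :: 'a set)" "closed_graph G" "real_name (PG G) pg_le A"
    and K: "\<And>j. compact (K j) \<and> anticlique G (K j)"
    and p: "\<And>f. f \<in> F \<Longrightarrow> (a f, V f) \<in> PG G" "\<And>f. f \<in> F \<Longrightarrow> a f \<subseteq> (\<Union>j. K j)"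
    and forces: "\<And>f n. f \<in> F \<Longrightarrow> M f \<le> n \<Longrightarrow> forces_ge (PG G) pg_le A (a f, V f) n (f n)"
  shows "\<exists>h. \<forall>f\<in>F. \<forall>\<^sub>F n in sequentially. f n \<le> h n"
proof -
  have "\<forall>f\<in>F. \<exists>xs idx e. condition_code G K (a f) (V f) xs idx e"
    using PG_ex_condition_code[OF assms(2) p] by blast
  then obtain xs where "\<forall>f\<in>F. \<exists>idx e. condition_code G K (a f) (V f) (xs f) idx e"
    by (rule bchoice[THEN exE])
  then obtain idx where "\<forall>f\<in>F. \<exists>e. condition_code G K (a f) (V f) (xs f) (idx f) e"
    by (rule bchoice[THEN exE])
  then obtain e where "\<forall>f\<in>F. condition_code G K (a f) (V f) (xs f) (idx f) (e f)"
    by (rule bchoice[THEN exE])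
  then have code: "set (xs f) = a f" "length (xs f) = length (idx f)"
      "\<And>t. t < length (idx f) \<Longrightarrow> xs f ! t \<in> K (idx f ! t)"
      "radius_separates (non_edges G) (V f) (xs f) (1 / real (Suc (e f)))"
    if "f \<in> F" for f
    using that unfolding condition_code_def by auto
  show ?thesis
  proof (rule dominated_if_countably_many_bounded_classes[where code = "\<lambda>f. (M f, idx f, e f)" and m = fst])
    fix c :: "nat \<times> 'j list \<times> nat" and n assume "fst c \<le> n"
    obtain m0 idx0 e0 where c: "c = (m0, idx0, e0)"
      by (cases c)
    have "\<exists>B. \<forall>f\<in>{f\<in>F. (M f, idx f, e f) = c}. f n \<le> B"
    proof (rule forces_ge_bounded_on_code_class[OF assms(1-3), where K = K and xs = xs and V = V
          and idx = idx0 and \<rho> = "1 / real (Suc e0)"])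
      show "closed (K j) \<and> anticlique G (K j)" for j
        using K compact_imp_closed by blast
      show "\<And>f. f \<in> {f \<in> F. (M f, idx f, e f) = c} \<Longrightarrow> forces_ge (PG G) pg_le A (set (xs f), V f) n (f n)"
        using code(1) forces \<open>fst c \<le> n\<close> c by auto
    qed (use code p c in auto)
    then show "\<exists>B. \<forall>f\<in>F. (M f, idx f, e f) = c \<longrightarrow> f n \<le> B"
      by auto
  qed
qed

theorem theorem2p3:
  fixes G :: "'a::metric_space \<Rightarrow> 'a \<Rightarrow> bool"
  assumes "compact (UNIV :: 'a set)"
    and "closed_graph G"
    and "b_less_kappa G"
  shows "\<not> adds_dominating_real (PG G) pg_le"
proof
  assume "adds_dominating_real (PG G) pg_le"
  then obtain A p where A: "real_name (PG G) pg_le A" and "p \<in> PG G"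
    and dominates: "\<And>f. forces_dominates (PG G) pg_le A p f"
    unfolding adds_dominating_real_def by blast
  obtain F where unbounded: "unbounded_family F"
    and covered: "\<And>Y::'a set. (card_of Y, card_of F) \<in> ordLeq \<Longrightarrow> cc_covered G Y"
    using assms(3) unfolding b_less_kappa_def by blast
  have "\<exists>r m. r \<in> PG G \<and> (\<forall>n\<ge>m. forces_ge (PG G) pg_le A r n (f n))" for f
    using dominates[of f] \<open>p \<in> PG G\<close> pg_le_refl[of p] unfolding forces_dominates_def by blast
  then obtain R M where R: "\<And>f. R f \<in> PG G"
    and forces: "\<And>f n. M f \<le> n \<Longrightarrow> forces_ge (PG G) pg_le A (R f) n (f n)"
    by metis
  have "(card_of (\<Union>f\<in>F. fst (R f)), card_of F) \<in> ordLeq"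
    by (intro card_of_UN_finite_ordLeq unbounded_family_infinite[OF unbounded] PG_fst_finite[OF R])
  then have "cc_covered G (\<Union>f\<in>F. fst (R f))"
    by (rule covered)
  then obtain K :: "nat \<Rightarrow> 'a set"
    where K: "\<forall>j. compact (K j) \<and> anticlique G (K j)" "(\<Union>f\<in>F. fst (R f)) \<subseteq> (\<Union>j. K j)"
    using cc_covered_nat_indexed by blast
  have "\<exists>h. \<forall>f\<in>F. \<forall>\<^sub>F n in sequentially. f n \<le> h n"
    using R forces K(2)
    by (intro dominated_if_forced_bounds_covered[OF assms(1,2) A spec[OF K(1)], where a = "\<lambda>f. fst (R f)"
          and V = "\<lambda>f. snd (R f)" and M = M]) auto
  with unbounded show False
    unfolding unbounded_family_def by blast
qed

end
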